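(* Consider a Markov process with state space $\mathcal{S}\subseteq\mathbb{R}^{d_{\mathcal{S}}}$ consisting of state variables $s^1,\dots,s^{d_{\mathcal{S}}}$ (one per coordinate) and action space $\mathcal{A}\subseteq\mathbb{R}^{d_{\mathcal{A}}}$, whose data-generating process over time is described by a causal graphical model (a directed acyclic graph $\mathcal{G}$ over the time-indexed variables $s^k_t$, $a_t$, possibly together with unobserved variables, with joint distribution factorizing as $\prod_i p(x^i\mid \mathrm{PA}_i)$ over the parents in $\mathcal{G}$). Assume: (A1) the joint distribution and $\mathcal{G}$ satisfy the causal Markov condition and causal faithfulness; (A2) the state is fully observable and the dynamics is Markovian, i.e. $s_{t-1}\perp\!\!\!\perp s_{t+1}\mid s_t$ (together with the action), and the transition is given by $\mathcal{P}(s_{t+1}\mid s_t,a_t)$; (A3) for every state variable $s^i$, the edge $s^i_t\to s^i_{t+1}$ is present in $\mathcal{G}$; (A4) there are no simultaneous or backward edges in time: for all $i,j$, $s^i_t\not\to s^j_t$ and $s^i_t\not\to s^j_{t-1}$; (A5) the transitions of the state variables are independent: $\mathcal{P}(s_{t+1}\mid s_t,a_t)=\prod_{j=1}^{d_{\mathcal{S}}} p(s^j_{t+1}\mid s_t,a_t)$. For an index $i$, let $\{a_t, s_t\setminus s^i_t\}=\{a_t,s^1_t,\dots,s^{i-1}_t,s^{i+1}_t,\dots,s^{d_{\mathcal{S}}}_t\}$. Then for any indices $i,j\in\{1,\dots,d_{\mathcal{S}}\}$: if $s^i_t$ and $s^j_{t+1}$ are conditionally dependent given $\{a_t, s_t\setminus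 s^i_t\}$, then the edge $s^i_t\to s^j_{t+1}$ exists in $\mathcal{G}$. Similarly, if $a_t$ and $s^j_{t+1}$ are conditionally dependent given $s_t$, then the edge $a_t\to s^j_{t+1}$ exists in $\mathcal{G}$.
   Context: A causal graphical model consists of a DAG $\mathcal{G}=(V,E)$ and a distribution $p$ over random variables indexed by $V$, where an edge $X^i\to X^j$ means $X^i$ is a direct cause of $X^j$, and $p(x^1,\dots,x^d)=\prod_i p(x^i\mid \mathrm{PA}_i)$ with $\mathrm{PA}_i$ the parents of node $i$. d-separation: a path $I_1,\dots,I_m$ is blocked by a set $S$ (not containing $I_1,I_m$) if some intermediate node $I_k$ either (i) lies in $S$ and is a chain or fork node ($I_{k-1}\to I_k\to I_{k+1}$, $I_{k-1}\leftarrow I_k\leftarrow I_{k+1}$, or $I_{k-1}\leftarrow I_k\to I_{k+1}$), or (ii) is a collider $I_{k-1}\to I_k\leftarrow I_{k+1}$ such that neither $I_k$ nor any descendant is in $S$; $A$ and $B$ are d-separated by $C$ if every path between them is blocked by $C$. The (global) causal Markov condition: for all disjoint vertex sets $A,B,C$, d-separation of $A$ and $B$ by $C$ in $\mathcal{G}$ implies $A\perp\!\!\!\perp B\mid C$ under $p$. Causal faithfulness: $p$ has no conditional independence relations other than those entailed by the Markov property (i.e. conditional independence implies d-separation). In this setting the action $a_t$ has no parents in $\mathcal{G}$. *)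

theory Defs
  imports "HOL-Probability.Probability"
begin

text \<open>Time-indexed variables of the process: state variable s^k_t is St t k
  (k in 1..dS), the action a_t is Act t.  Time ranges over the integers.\<close>
datatype vertex = St int nat | Act int

definition vars :: "nat \<Rightarrow> vertex set" where
  "vars dS = {St t k | t k. k \<in> {1..dS}} \<union> range Act"

definition state_at :: "nat \<Rightarrow> int \<Rightarrow> vertex set" where
  "state_at dS t = {St t k | k. k \<in> {1..dS}}"

definition adjacent :: "(vertex \<times> vertex) set \<Rightarrow> vertex \<Rightarrow> vertex \<Rightarrow> bool" where
  "adjacent E x y \<longleftrightarrow> (x, y) \<in> E \<or> (y, x) \<in> E"

definition is_path :: "(vertex \<times> vertex) set \<Rightarrow> vertex list \<Rightarrow> bool" where
  "is_path E p \<longleftrightarrow> 2 \<le> length p \<and> distinct p \<and>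
     (\<forall>k. Suc k < length p \<longrightarrow> adjacent E (p ! k) (p ! Suc k))"

definition collider :: "(vertex \<times> vertex) set \<Rightarrow> vertex list \<Rightarrow> nat \<Rightarrow> bool" where
  "collider E p k \<longleftrightarrow> (p ! (k - 1), p ! k) \<in> E \<and> (p ! (k + 1), p ! k) \<in> E"

definition blocked :: "(vertex \<times> vertex) set \<Rightarrow> vertex set \<Rightarrow> vertex list \<Rightarrow> bool" where
  "blocked E C p \<longleftrightarrow> (\<exists>k. 0 < k \<and> k + 1 < length p \<and>
     ((p ! k \<in> C \<and> \<not> collider E p k) \<or>
      (collider E p k \<and> (\<forall>d. (p ! k, d) \<in> E\<^sup>* \<longrightarrow> d \<notin> C))))"

definition d_separated :: "(vertex \<times> vertex) set \<Rightarrow> vertex set \<Rightarrow> vertex set \<Rightarrow> vertex set \<Rightarrow> bool" where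
  "d_separated E A B C \<longleftrightarrow>
     (\<forall>p. is_path E p \<and> hd p \<in> A \<and> last p \<in> B \<longrightarrow> blocked E C p)"

definition var_events :: "'w measure \<Rightarrow> (int \<Rightarrow> nat \<Rightarrow> 'w \<Rightarrow> real) \<Rightarrow> (int \<Rightarrow> 'w \<Rightarrow> real^'n)
    \<Rightarrow> vertex \<Rightarrow> 'w set set" where
  "var_events M XS XA v = (case v of
      St t k \<Rightarrow> {XS t k -` B \<inter> space M | B. B \<in> sets borel}
    | Act t \<Rightarrow> {XA t -` B \<inter> space M | B. B \<in> sets borel})"

definition gen_events :: "'w measure \<Rightarrow> (int \<Rightarrow> nat \<Rightarrow> 'w \<Rightarrow> real) \<Rightarrow> (int \<Rightarrow> 'w \<Rightarrow> real^'n)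
    \<Rightarrow> vertex set \<Rightarrow> 'w set set" where
  "gen_events M XS XA A = (\<Union>v\<in>A. var_events M XS XA v)"

definition cond_indep :: "'w measure \<Rightarrow> (int \<Rightarrow> nat \<Rightarrow> 'w \<Rightarrow> real) \<Rightarrow> (int \<Rightarrow> 'w \<Rightarrow> real^'n)
    \<Rightarrow> vertex set \<Rightarrow> vertex set \<Rightarrow> vertex set \<Rightarrow> bool" where
  "cond_indep M XS XA A B C \<longleftrightarrow>
    (let F = sigma (space M) (gen_events M XS XA C) in
     \<forall>P \<in> sigma_sets (space M) (gen_events M XS XA A).
     \<forall>Q \<in> sigma_sets (space M) (gen_events M XS XA B).
       AE \<omega> in M. real_cond_exp M F (indicator (P \<inter> Q)) \<omega> =
                   real_cond_exp M F (indicator P) \<omega> * real_cond_exp M F (indicator Q) \<omega>)"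

end

theory Submission
  imports Defs
begin

text \<open>By the Markov condition it suffices to show that, for x = s^i_t or x = a_t with no edge
  x \<rightarrow> s^j_{t+1}, every path from x to s^j_{t+1} is blocked by the rest of the time slice
  s_t \<union> {a_t}. Faithfulness turns (A2) into the d-separation of s_{t-1} and s_{t+1} by that
  time slice. The states after time t are closed under descendants and avoid the conditioning
  set, so a d-connecting path that steps backward into them stays there all the way back to its
  start. Hence its last edge points into s^j_{t+1}, and by (A4) it comes either from a state
  before time t or from an action a_T, T \<noteq> t, whose other neighbour on the path is a state
  at time at most t. Prefixing the persistence edges of (A3) then yields a d-connecting path
  from s_{t-1} to s_{t+1}, contradicting (A2).\<close>

definition blocks ::
    "(vertex \<times> vertex) set \<Rightarrow> vertex set \<Rightarrow> vertex \<Rightarrow> vertex \<Rightarrow> vertex \<Rightarrow> bool" where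
  "blocks E C u v w \<longleftrightarrow>
     (if (u, v) \<in> E \<and> (w, v) \<in> E then \<forall>d. (v, d) \<in> E\<^sup>* \<longrightarrow> d \<notin> C else v \<in> C)"

definition d_connecting ::
    "(vertex \<times> vertex) set \<Rightarrow> vertex set \<Rightarrow> vertex list \<Rightarrow> bool" where
  "d_connecting E C p \<longleftrightarrow> is_path E p \<and> \<not> blocked E C p"

lemma d_separated_iff_d_connecting:
  "d_separated E A B C \<longleftrightarrow> (\<forall>p. d_connecting E C p \<longrightarrow> hd p \<in> A \<longrightarrow> last p \<notin> B)"
  unfolding d_separated_def d_connecting_def by blast

lemma blocked_iff_blocks:
  "blocked E C p \<longleftrightarrow>
     (\<exists>k. 0 < k \<and> Suc k < length p \<and> blocks E C (p ! (k - 1)) (p ! k) (p ! Suc k))"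
  unfolding blocked_def blocks_def collider_def by auto

lemma blocked_Cons_Cons_Cons:
  "blocked E C (x # y # z # p) \<longleftrightarrow> blocks E C x y z \<or> blocked E C (y # z # p)"
    (is "blocked E C ?p \<longleftrightarrow> _")
proof
  assume "blocked E C ?p"
  then obtain k where k: "0 < k" "Suc k < length ?p"
    and b: "blocks E C (?p ! (k - 1)) (?p ! k) (?p ! Suc k)"
    unfolding blocked_iff_blocks by blast
  show "blocks E C x y z \<or> blocked E C (y # z # p)"
  proof (cases "k = 1")
    case True
    with b show ?thesis by simp
  next
    case False
    with k b have "0 < k - 1 \<and> Suc (k - 1) < length (y # z # p) \<and>
        blocks E C ((y # z # p) ! (k - 1 - 1)) ((y # z # p) ! (k - 1)) ((y # z # p) ! Suc (k - 1))"
      by (auto simp: nth_Cons')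
    then show ?thesis unfolding blocked_iff_blocks by blast
  qed
next
  assume "blocks E C x y z \<or> blocked E C (y # z # p)"
  then show "blocked E C ?p"
    unfolding blocked_iff_blocks by (auto intro: exI[of _ 1] exI[of _ "Suc _"])
qed

lemma successively_iff_nth:
  "successively P xs \<longleftrightarrow> (\<forall>k. Suc k < length xs \<longrightarrow> P (xs ! k) (xs ! Suc k))"
proof (induction P xs rule: successively.induct)
  case (3 P x y xs)
  then show ?case by (auto simp: less_Suc_eq_0_disj)
qed simp_all

lemma is_path_iff_successively:
  "is_path E p \<longleftrightarrow> 2 \<le> length p \<and> distinct p \<and> successively (adjacent E) p"
  by (simp add: is_path_def successively_iff_nth)

lemma d_connecting_two [simp]: "d_connecting E C [x, y] \<longleftrightarrow> adjacent E x y \<and> x \<noteq> y"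
  by (auto simp: d_connecting_def is_path_iff_successively blocked_def)

lemma d_connecting_Cons_Cons_Cons [simp]:
  "d_connecting E C (x # y # z # p) \<longleftrightarrow>
     adjacent E x y \<and> x \<notin> set (y # z # p) \<and> \<not> blocks E C x y z \<and> d_connecting E C (y # z # p)"
  by (auto simp: d_connecting_def is_path_iff_successively blocked_Cons_Cons_Cons)

lemma d_connecting_length: "d_connecting E C p \<Longrightarrow> 2 \<le> length p"
  by (simp add: d_connecting_def is_path_def)

lemma d_connecting_adjacent:
  "d_connecting E C p \<Longrightarrow> Suc k < length p \<Longrightarrow> adjacent E (p ! k) (p ! Suc k)"
  by (simp add: d_connecting_def is_path_def)

lemma d_connecting_not_blocks:
  "d_connecting E C p \<Longrightarrow> Suc (Suc k) < length p \<Longrightarrow>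
     \<not> blocks E C (p ! k) (p ! Suc k) (p ! Suc (Suc k))"
  unfolding d_connecting_def blocked_iff_blocks by fastforce

text \<open>Nodes of D cannot be colliders of a d-connecting path, as their descendants avoid C;
  so once the path is traversed against an arrow into D, every earlier edge also points back
  into D.\<close>
lemma d_connecting_hd_in_closed_set:
  assumes p: "d_connecting E C p" and closed: "E `` D \<subseteq> D" and "D \<inter> C = {}"
  shows "Suc k < length p \<Longrightarrow> (p ! Suc k, p ! k) \<in> E \<Longrightarrow> p ! k \<in> D \<Longrightarrow> hd p \<in> D"
proof (induction k)
  case 0
  then show ?case by (cases p) auto
next
  case (Suc k)
  have "\<forall>d. (p ! Suc k, d) \<in> E\<^sup>* \<longrightarrow> d \<notin> C"
    using Image_closed_trancl[OF closed] Suc.prems(3) \<open>D \<inter> C = {}\<close> by blast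
  moreover have "\<not> blocks E C (p ! k) (p ! Suc k) (p ! Suc (Suc k))"
    using d_connecting_not_blocks[OF p Suc.prems(1)] .
  ultimately have "(p ! k, p ! Suc k) \<notin> E"
    using Suc.prems(2) by (auto simp: blocks_def)
  then have "(p ! Suc k, p ! k) \<in> E"
    using d_connecting_adjacent[OF p, of k] Suc.prems(1) by (simp add: adjacent_def)
  moreover have "p ! k \<in> D"
    using calculation Suc.prems(3) closed by blast
  ultimately show ?case
    using Suc.IH Suc.prems(1) by simp
qed

abbreviation time_slice :: "nat \<Rightarrow> int \<Rightarrow> vertex set" where
  "time_slice dS t \<equiv> state_at dS t \<union> {Act t}"

definition future :: "int \<Rightarrow> vertex set" where
  "future t = {St a m | a m. t < a}"

primrec persistence_chain :: "nat \<Rightarrow> int \<Rightarrow> nat \<Rightarrow> vertex list" where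
  "persistence_chain m a 0 = [St a m]"
| "persistence_chain m a (Suc n) = St (a + int (Suc n)) m # persistence_chain m a n"

lemma set_persistence_chain:
  "set (persistence_chain m a n) = (\<lambda>c. St c m) ` {a..a + int n}"
proof (induction n)
  case (Suc n)
  have "{a..a + int (Suc n)} = insert (a + int (Suc n)) {a..a + int n}"
    by auto
  with Suc show ?case by simp
qed simp

lemma persistence_chain_not_Nil [simp]: "persistence_chain m a n \<noteq> []"
  by (cases n) simp_all

lemma hd_persistence_chain: "hd (persistence_chain m a n) = St (a + int n) m"
  by (cases n) simp_all

locale causal_mdp_graph =
  fixes E :: "(vertex \<times> vertex) set" and dS :: nat
  assumes edges_in_vars: "E \<subseteq> vars dS \<times> vars dS"
    and no_edge_into_Act: "(v, Act t) \<notin> E"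
    and persistence_edge: "i \<in> {1..dS} \<Longrightarrow> (St t i, St (t + 1) i) \<in> E"
    and no_backward_edge: "t' \<le> t \<Longrightarrow> (St t i, St t' j) \<notin> E"
    and past_future_d_separated:
      "d_separated E (state_at dS (t - 1)) (state_at dS (t + 1)) (time_slice dS t)"
begin

lemma no_d_connecting_past_future:
  "d_connecting E (time_slice dS t) p \<Longrightarrow> hd p \<in> state_at dS (t - 1) \<Longrightarrow>
     last p \<notin> state_at dS (t + 1)"
  using past_future_d_separated by (simp add: d_separated_iff_d_connecting)

lemma edge_source_St_index: "(St a m, v) \<in> E \<Longrightarrow> m \<in> {1..dS}"
  using edges_in_vars by (auto simp: vars_def)

lemma edge_target_St: "(u, v) \<in> E \<Longrightarrow> \<exists>a m. v = St a m \<and> m \<in> {1..dS}"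
  using edges_in_vars no_edge_into_Act by (cases v) (auto simp: vars_def)

lemma future_closed: "E `` future t \<subseteq> future t"
proof
  fix v assume "v \<in> E `` future t"
  then obtain a m where "t < a" "(St a m, v) \<in> E" by (auto simp: future_def)
  moreover obtain b k where "v = St b k" using edge_target_St[OF \<open>(St a m, v) \<in> E\<close>] by blast
  ultimately show "v \<in> future t"
    using no_backward_edge[of b a m k] by (auto simp: future_def not_le[symmetric])
qed

lemma d_connecting_persistence_chain_append:
  assumes q: "d_connecting E C (St a m # q)" and m: "m \<in> {1..dS}"
    and fresh: "\<And>c. a \<le> c \<Longrightarrow> c \<le> a + int n \<Longrightarrow> St c m \<notin> C \<and> St c m \<notin> set q"
  shows "d_connecting E C (persistence_chain m a n @ q)"
  using fresh
proof (induction n)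
  case 0
  with q show ?case by simp
next
  case (Suc n)
  let ?x = "St (a + int (Suc n)) m" and ?y = "St (a + int n) m"
  have "persistence_chain m a n @ q = ?y # tl (persistence_chain m a n) @ q"
    by (cases n) simp_all
  moreover obtain z r where "tl (persistence_chain m a n) @ q = z # r"
    using d_connecting_length[OF q] by (cases "tl (persistence_chain m a n) @ q") auto
  ultimately have zr: "persistence_chain m a n @ q = ?y # z # r"
    by simp
  have "d_connecting E C (persistence_chain m a n @ q)"
    by (rule Suc.IH) (use Suc.prems in auto)
  moreover have "(?y, ?x) \<in> E"
    using persistence_edge[OF m, of "a + int n"] by (simp add: ac_simps)
  moreover have "(?x, ?y) \<notin> E"
    using no_backward_edge by simp
  moreover have "?y \<notin> C"
    using Suc.prems[of "a + int n"] by simp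
  moreover have "?x \<notin> set (?y # z # r)"
    using Suc.prems[of "a + int (Suc n)"] zr[symmetric] by (auto simp: set_persistence_chain)
  ultimately show ?case
    by (simp add: zr adjacent_def blocks_def)
qed

lemma no_d_connecting_path_from_past:
  assumes a: "a \<le> t - 1" and m: "m \<in> {1..dS}"
    and q: "d_connecting E (time_slice dS t) (St a m # q)"
    and last_q: "last q \<in> state_at dS (t + 1)"
    and past_free: "\<And>c. c < t \<Longrightarrow> St c m \<notin> set q"
  shows False
proof -
  define p where "p = persistence_chain m a (nat (t - 1 - a)) @ q"
  have "d_connecting E (time_slice dS t) p"
    unfolding p_def using a past_free
    by (intro d_connecting_persistence_chain_append[OF q m]) (auto simp: state_at_def)
  moreover have "hd p \<in> state_at dS (t - 1)"
    using a m by (simp add: p_def hd_persistence_chain state_at_def)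
  moreover have "last p \<in> state_at dS (t + 1)"
    using last_q d_connecting_length[OF q] by (cases q) (simp_all add: p_def)
  ultimately show False
    using no_d_connecting_past_future by blast
qed

lemma no_edge_from_past: "a \<le> t - 1 \<Longrightarrow> (St a m, St (t + 1) j) \<notin> E"
  using no_d_connecting_path_from_past[of a t m "[St (t + 1) j]"]
    edge_source_St_index edge_target_St
  by (fastforce simp: adjacent_def state_at_def)

lemma no_action_confounding:
  assumes "T \<noteq> t" and "a \<le> t" and "(Act T, St a m) \<in> E"
  shows "(Act T, St (t + 1) j) \<notin> E"
proof
  assume to_next: "(Act T, St (t + 1) j) \<in> E"
  have m: "m \<in> {1..dS}" and j: "j \<in> {1..dS}"
    using edge_target_St[OF assms(3)] edge_target_St[OF to_next] by auto
  have action_not_blocking: "\<not> blocks E (time_slice dS t) u (Act T) w" for u w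
    using no_edge_into_Act \<open>T \<noteq> t\<close> by (simp add: blocks_def state_at_def)
  show False
  proof (cases "a = t")
    case True
    \<comment> \<open>the collider St t m is open because it is itself conditioned on\<close>
    have "d_connecting E (time_slice dS t) [St (t - 1) m, St t m, Act T, St (t + 1) j]"
      using persistence_edge[OF m, of "t - 1"] assms(3) to_next action_not_blocking True m
      by (auto simp: adjacent_def blocks_def state_at_def)
    then show False
      using no_d_connecting_past_future m j by (fastforce simp: state_at_def)
  next
    case False
    have "d_connecting E (time_slice dS t) [St a m, Act T, St (t + 1) j]"
      using assms(3) to_next action_not_blocking \<open>a \<le> t\<close> by (auto simp: adjacent_def)
    then show False
      using no_d_connecting_path_from_past[of a t m "[Act T, St (t + 1) j]"] False \<open>a \<le> t\<close> m j
      by (auto simp: state_at_def)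
  qed
qed

lemma parent_of_next_state:
  assumes parent: "(y, St (t + 1) j) \<in> E" and "y \<notin> time_slice dS t"
  obtains T where "y = Act T" and "E `` {y} \<subseteq> future t"
proof (cases y)
  case (St a m)
  with parent have "a < t + 1" and "m \<in> {1..dS}"
    using no_backward_edge[of "t + 1" a m j] edge_source_St_index by force+
  with \<open>y \<notin> time_slice dS t\<close> St have "a \<le> t - 1"
    by (auto simp: state_at_def)
  with parent St show ?thesis
    using no_edge_from_past by simp
next
  case (Act T)
  have "v \<in> future t" if child: "(Act T, v) \<in> E" for v
  proof -
    obtain a m where "v = St a m"
      using edge_target_St[OF child] by blast
    moreover have "T \<noteq> t"
      using Act \<open>y \<notin> time_slice dS t\<close> by simp
    ultimately show ?thesis
      using no_action_confounding[of T t a m j] child parent Act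
      by (force simp: future_def)
  qed
  with Act show ?thesis
    using that by blast
qed

lemma d_separated_if_no_edge_to_next_state:
  assumes x: "x \<in> time_slice dS t" and no_edge: "(x, St (t + 1) j) \<notin> E"
  shows "d_separated E {x} {St (t + 1) j} (time_slice dS t - {x})"
  unfolding d_separated_iff_d_connecting
proof (intro allI impI notI)
  fix p
  let ?C = "time_slice dS t - {x}" and ?Z = "St (t + 1) j"
  assume p: "d_connecting E ?C p" and hd_p: "hd p \<in> {x}" and "last p \<in> {?Z}"
  obtain k where len: "length p = Suc (Suc k)"
    using d_connecting_length[OF p] by (metis add_2_eq_Suc le_Suc_ex)
  then have "p \<noteq> []"
    by auto
  with len hd_p \<open>last p \<in> {?Z}\<close> have x0: "p ! 0 = x" and Z: "p ! Suc k = ?Z"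
    by (simp_all add: hd_conv_nth last_conv_nth)
  have "x \<notin> future t" and "future t \<inter> ?C = {}"
    using x by (auto simp: future_def state_at_def)
  then have not_backward_into_future:
    "\<not> ((p ! Suc i, p ! i) \<in> E \<and> p ! i \<in> future t)" if "Suc i < length p" for i
    using d_connecting_hd_in_closed_set[OF p future_closed] that hd_p by blast
  have "(?Z, p ! k) \<notin> E"
  proof
    assume into_k: "(?Z, p ! k) \<in> E"
    moreover have "?Z \<in> future t"
      by (simp add: future_def)
    ultimately have "p ! k \<in> future t"
      using future_closed by blast
    with into_k show False
      using not_backward_into_future[of k] len Z by simp
  qed
  then have last_edge: "(p ! k, ?Z) \<in> E"
    using d_connecting_adjacent[OF p, of k] len Z by (auto simp: adjacent_def)
  show False
  proof (cases k)
    case 0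
    then show False using last_edge no_edge x0 by simp
  next
    case (Suc i)
    let ?Y = "p ! Suc i"
    have "?Y \<notin> ?C"
      using d_connecting_not_blocks[OF p, of i] \<open>(?Z, p ! k) \<notin> E\<close> Suc len Z
      by (simp add: blocks_def)
    moreover have "?Y \<noteq> x"
      using p len Suc x0 by (auto simp: d_connecting_def is_path_def nth_eq_iff_index_eq)
    ultimately have "?Y \<notin> time_slice dS t"
      by blast
    then obtain T where "?Y = Act T" and "E `` {?Y} \<subseteq> future t"
      using parent_of_next_state last_edge Suc by blast
    moreover have "(?Y, p ! i) \<in> E"
      using d_connecting_adjacent[OF p, of i] len Suc no_edge_into_Act \<open>?Y = Act T\<close>
      by (auto simp: adjacent_def)
    ultimately have "p ! i \<in> future t"
      by blast
    with \<open>(?Y, p ! i) \<in> E\<close> show False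
      using not_backward_into_future[of i] len Suc by simp
  qed
qed

end

theorem theorem1:
  fixes M :: "'w measure"
    and XS :: "int \<Rightarrow> nat \<Rightarrow> 'w \<Rightarrow> real"
    and XA :: "int \<Rightarrow> 'w \<Rightarrow> real^'n"
    and dS :: nat
    and E :: "(vertex \<times> vertex) set"
  assumes prob: "prob_space M"
    and meas_S: "\<forall>t k. XS t k \<in> borel_measurable M"
    and meas_A: "\<forall>t. XA t \<in> borel_measurable M"
    and graph: "E \<subseteq> vars dS \<times> vars dS"
    and dag: "acyclic E"
    and act_no_parents: "\<forall>t v. (v, Act t) \<notin> E"
    and markov: "\<forall>A B C. A \<subseteq> vars dS \<and> B \<subseteq> vars dS \<and> C \<subseteq> vars dS \<and>
                   A \<inter> B = {} \<and> A \<inter> C = {} \<and> B \<inter> C = {} \<longrightarrow>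
                   d_separated E A B C \<longrightarrow> cond_indep M XS XA A B C"
    and faithful: "\<forall>A B C. A \<subseteq> vars dS \<and> B \<subseteq> vars dS \<and> C \<subseteq> vars dS \<and>
                   A \<inter> B = {} \<and> A \<inter> C = {} \<and> B \<inter> C = {} \<longrightarrow>
                   cond_indep M XS XA A B C \<longrightarrow> d_separated E A B C"
    and A2: "\<forall>t. cond_indep M XS XA (state_at dS (t - 1)) (state_at dS (t + 1))
                   (state_at dS t \<union> {Act t})"
    and A3: "\<forall>t i. i \<in> {1..dS} \<longrightarrow> (St t i, St (t + 1) i) \<in> E"
    and A4: "\<forall>t t' i j. t' \<le> t \<longrightarrow> (St t i, St t' j) \<notin> E"
    and A5: "\<forall>t j. j \<in> {1..dS} \<longrightarrow>
               cond_indep M XS XA {St (t + 1) j} (state_at dS (t + 1) - {St (t + 1) j})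
                 (state_at dS t \<union> {Act t})"
  shows "\<forall>t i j. i \<in> {1..dS} \<and> j \<in> {1..dS} \<longrightarrow>
           (\<not> cond_indep M XS XA {St t i} {St (t + 1) j} ({Act t} \<union> (state_at dS t - {St t i}))
              \<longrightarrow> (St t i, St (t + 1) j) \<in> E) \<and>
           (\<not> cond_indep M XS XA {Act t} {St (t + 1) j} (state_at dS t)
              \<longrightarrow> (Act t, St (t + 1) j) \<in> E)"
proof -
  have "d_separated E (state_at dS (t - 1)) (state_at dS (t + 1)) (time_slice dS t)" for t
    by (rule faithful[rule_format, OF _ A2[rule_format]]) (auto simp: state_at_def vars_def)
  then interpret causal_mdp_graph E dS
    using graph act_no_parents A3 A4 by unfold_locales auto
  have edge_if_dependent: "(x, St (t + 1) j) \<in> E"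
    if x: "x \<in> time_slice dS t" and j: "j \<in> {1..dS}"
      and dependent: "\<not> cond_indep M XS XA {x} {St (t + 1) j} (time_slice dS t - {x})" for x t j
  proof (rule ccontr)
    assume "(x, St (t + 1) j) \<notin> E"
    with x have "d_separated E {x} {St (t + 1) j} (time_slice dS t - {x})"
      by (rule d_separated_if_no_edge_to_next_state)
    then have "cond_indep M XS XA {x} {St (t + 1) j} (time_slice dS t - {x})"
      using x j by (intro markov[rule_format]) (auto simp: state_at_def vars_def)
    with dependent show False ..
  qed
  have "{Act t} \<union> (state_at dS t - {St t i}) = time_slice dS t - {St t i}"
    and "state_at dS t = time_slice dS t - {Act t}" for t i
    by (auto simp: state_at_def)
  with edge_if_dependent show ?thesis
    by (auto simp: state_at_def)
qed

end
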